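(* Let $R$ be a commutative unital ring, $G$ a group, $(\mathcal B_1,\Phi_1)\subseteq(\mathcal B_2,\Phi_2)$ a partial subaction of $G$ on generalized Boolean algebras with $\Phi_2=(\{\mathcal I_{2,t}\},\{\phi_{2,t}\})$, and $A_2=\mathrm{Lc}(R,\mathcal B_2)\rtimes_{\Phi_2}G$. Suppose $\mathcal B_1$ is an ideal of $\mathcal B_2$ and that for every $U\in\mathcal B_2$ there exist $g_1,\dots,g_n\in G$ and $V_i\in\mathcal I_{2,g_i^{-1}}\cap\mathcal B_1$ with $U\le\bigcup_{i=1}^n\phi_{2,g_i}(V_i)$. Then for every $U\in\mathcal B_2$ there exist an index set $I$, elements $U_i\in\mathcal B_1$ ($i\in I$) and a surjective left $A_2$-module homomorphism $\bigoplus_{i\in I}A_2(U_i\delta_e)\to A_2(U\delta_e)$.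
   Context: A generalized Boolean algebra is a distributive relatively complemented lattice with least element $0$; an ideal is a subset closed under finite joins and under meets with arbitrary elements. A partial action $\Phi$ of $G$ on $\mathcal B$: ideals $\mathcal I_t$ and isomorphisms $\phi_t:\mathcal I_{t^{-1}}\to\mathcal I_t$ with $\mathcal I_e=\mathcal B$, $\phi_e=\mathrm{id}$, $\phi_s(\mathcal I_{s^{-1}}\cap\mathcal I_t)=\mathcal I_s\cap\mathcal I_{st}$, $\phi_s\phi_t=\phi_{st}$ where defined. A partial subaction: $\mathcal B_1\subseteq\mathcal B_2$ sub generalized Boolean algebra, $\mathcal I_{1,t}\subseteq\mathcal I_{2,t}$, $\phi_{2,t}$ restricting to $\phi_{1,t}$. $\mathrm{Lc}(R,\mathcal B)$ is the algebra of locally constant compactly supported $R$-valued functions on the Stone space of $\mathcal B$, spanned by idempotents $1_U$; $\mathrm{Lc}(R,\mathcal B)\rtimes_\Phi G=\bigoplus_g\mathrm{Lc}(R,\mathcal I_g)\delta_g$ with $U\delta_g:=1_U\delta_g$ and $(U\delta_g)(V\delta_h)=\phi_g(\phi_{g^{-1}}(U)\cap V)\delta_{gh}$. *)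

theory Defs
  imports Main "HOL-Library.Function_Algebras"
begin

text \<open>Generalized Boolean algebras are represented as subsets B of a type 'b carrying a
distributive lattice structure with least element bot; B must contain bot, be closed under
binary joins and meets, and be relatively complemented inside B.\<close>

definition gba :: "'b::{distrib_lattice,order_bot} set \<Rightarrow> bool" where
  "gba B \<longleftrightarrow> bot \<in> B \<and> (\<forall>a\<in>B. \<forall>b\<in>B. sup a b \<in> B \<and> inf a b \<in> B) \<and>
     (\<forall>a\<in>B. \<forall>b\<in>B. a \<le> b \<longrightarrow> (\<exists>c\<in>B. inf a c = bot \<and> sup a c = b))"

definition gba_ideal :: "'b::{distrib_lattice,order_bot} set \<Rightarrow> 'b set \<Rightarrow> bool" where
  "gba_ideal B I \<longleftrightarrow> I \<subseteq> B \<and> bot \<in> I \<and> (\<forall>a\<in>I. \<forall>b\<in>I. sup a b \<in> I) \<and>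
     (\<forall>a\<in>I. \<forall>b\<in>B. inf a b \<in> I)"

definition gba_iso :: "'b::{distrib_lattice,order_bot} set \<Rightarrow> 'b set \<Rightarrow> ('b \<Rightarrow> 'b) \<Rightarrow> bool" where
  "gba_iso I J f \<longleftrightarrow> bij_betw f I J \<and>
     (\<forall>a\<in>I. \<forall>b\<in>I. f (sup a b) = sup (f a) (f b) \<and> f (inf a b) = inf (f a) (f b))"

text \<open>Partial action of a group (written additively: e = 0, st = s + t, inverse = -t).\<close>
definition partial_action ::
  "'b::{distrib_lattice,order_bot} set \<Rightarrow> ('g::group_add \<Rightarrow> 'b set) \<Rightarrow> ('g \<Rightarrow> 'b \<Rightarrow> 'b) \<Rightarrow> bool" where
  "partial_action B I \<phi> \<longleftrightarrow> gba B \<and> (\<forall>t. gba_ideal B (I t)) \<and>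
     (\<forall>t. gba_iso (I (- t)) (I t) (\<phi> t)) \<and>
     I 0 = B \<and> (\<forall>x\<in>B. \<phi> 0 x = x) \<and>
     (\<forall>s t. \<phi> s ` (I (- s) \<inter> I t) = I s \<inter> I (s + t)) \<and>
     (\<forall>s t. \<forall>x\<in>I (- t). \<phi> t x \<in> I (- s) \<longrightarrow> \<phi> s (\<phi> t x) = \<phi> (s + t) x)"

definition partial_subaction ::
  "'b::{distrib_lattice,order_bot} set \<Rightarrow> ('g::group_add \<Rightarrow> 'b set) \<Rightarrow> ('g \<Rightarrow> 'b \<Rightarrow> 'b) \<Rightarrow>
   'b set \<Rightarrow> ('g \<Rightarrow> 'b set) \<Rightarrow> ('g \<Rightarrow> 'b \<Rightarrow> 'b) \<Rightarrow> bool" where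
  "partial_subaction B1 I1 \<phi>1 B2 I2 \<phi>2 \<longleftrightarrow>
     partial_action B1 I1 \<phi>1 \<and> partial_action B2 I2 \<phi>2 \<and> B1 \<subseteq> B2 \<and>
     (\<forall>t. I1 t \<subseteq> I2 t) \<and> (\<forall>t. \<forall>x\<in>I1 (- t). \<phi>2 t x = \<phi>1 t x)"

text \<open>Stone space of B: prime filters of B.\<close>
definition prime_filter :: "'b::{distrib_lattice,order_bot} set \<Rightarrow> 'b set \<Rightarrow> bool" where
  "prime_filter B p \<longleftrightarrow> p \<subseteq> B \<and> p \<noteq> {} \<and> bot \<notin> p \<and>
     (\<forall>a\<in>p. \<forall>b\<in>B. a \<le> b \<longrightarrow> b \<in> p) \<and> (\<forall>a\<in>p. \<forall>b\<in>p. inf a b \<in> p) \<and>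
     (\<forall>a\<in>B. \<forall>b\<in>B. sup a b \<in> p \<longrightarrow> a \<in> p \<or> b \<in> p)"

text \<open>The idempotent 1_U: indicator of the compact open set of prime filters containing U.\<close>
definition ind :: "'b::{distrib_lattice,order_bot} set \<Rightarrow> 'b \<Rightarrow> 'b set \<Rightarrow> 'r::comm_ring_1" where
  "ind B U = (\<lambda>p. if prime_filter B p \<and> U \<in> p then 1 else 0)"

text \<open>Lc(R, S) for S a sub generalized Boolean algebra (or ideal) of B, realised inside the
functions on the Stone space of B: the R-span of the idempotents 1_U, U in S.\<close>
definition Lc :: "'b::{distrib_lattice,order_bot} set \<Rightarrow> 'b set \<Rightarrow> ('b set \<Rightarrow> 'r::comm_ring_1) set" where
  "Lc B S = {f. \<exists>F c. finite F \<and> F \<subseteq> S \<and> f = (\<lambda>p. \<Sum>U\<in>F. c U * ind B U p)}"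

text \<open>The induced partial action on functions: alpha_g f = f o (dual of phi_(g^-1)),
so that alpha_g (1_V) = 1_(phi_g V) for V in I_(g^-1).\<close>
definition pull :: "'b::{distrib_lattice,order_bot} set \<Rightarrow> ('g::group_add \<Rightarrow> 'b set) \<Rightarrow> ('g \<Rightarrow> 'b \<Rightarrow> 'b)
    \<Rightarrow> 'g \<Rightarrow> 'b set \<Rightarrow> 'b set" where
  "pull B I \<phi> g p = {b\<in>B. \<exists>a\<in>p \<inter> I g. \<phi> (- g) a \<le> b}"

definition alpha :: "'b::{distrib_lattice,order_bot} set \<Rightarrow> ('g::group_add \<Rightarrow> 'b set) \<Rightarrow> ('g \<Rightarrow> 'b \<Rightarrow> 'b)
    \<Rightarrow> 'g \<Rightarrow> ('b set \<Rightarrow> 'r::comm_ring_1) \<Rightarrow> ('b set \<Rightarrow> 'r)" where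
  "alpha B I \<phi> g f = (\<lambda>p. if prime_filter B p \<and> p \<inter> I g \<noteq> {} then f (pull B I \<phi> g p) else 0)"

text \<open>The skew group ring Lc(R,B) \<rtimes> G = direct sum of Lc(R, I_g) delta_g,
elements represented as finitely supported functions g \<mapsto> a_g.\<close>
definition skew :: "'b::{distrib_lattice,order_bot} set \<Rightarrow> ('g::group_add \<Rightarrow> 'b set) \<Rightarrow> ('g \<Rightarrow> 'b \<Rightarrow> 'b)
    \<Rightarrow> ('g \<Rightarrow> 'b set \<Rightarrow> 'r::comm_ring_1) set" where
  "skew B I \<phi> = {a. finite {g. a g \<noteq> 0} \<and> (\<forall>g. a g \<in> Lc B (I g))}"

text \<open>(a_g delta_g)(b_h delta_h) = alpha_g(alpha_(g^-1)(a_g) b_h) delta_(gh), extended bilinearly.\<close>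
definition skew_mult :: "'b::{distrib_lattice,order_bot} set \<Rightarrow> ('g::group_add \<Rightarrow> 'b set) \<Rightarrow> ('g \<Rightarrow> 'b \<Rightarrow> 'b)
    \<Rightarrow> ('g \<Rightarrow> 'b set \<Rightarrow> 'r::comm_ring_1) \<Rightarrow> ('g \<Rightarrow> 'b set \<Rightarrow> 'r) \<Rightarrow> ('g \<Rightarrow> 'b set \<Rightarrow> 'r)" where
  "skew_mult B I \<phi> a b = (\<lambda>k. \<Sum>g\<in>{g. a g \<noteq> 0}.
      alpha B I \<phi> g (\<lambda>p. alpha B I \<phi> (- g) (a g) p * b (- g + k) p))"

definition delta :: "'b::{distrib_lattice,order_bot} set \<Rightarrow> 'b \<Rightarrow> 'g \<Rightarrow> ('g \<Rightarrow> 'b set \<Rightarrow> 'r::comm_ring_1)" where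
  "delta B U g = (\<lambda>k. if k = g then ind B U else 0)"

definition left_ideal :: "'b::{distrib_lattice,order_bot} set \<Rightarrow> ('g::group_add \<Rightarrow> 'b set) \<Rightarrow> ('g \<Rightarrow> 'b \<Rightarrow> 'b)
    \<Rightarrow> ('g \<Rightarrow> 'b set \<Rightarrow> 'r::comm_ring_1) \<Rightarrow> ('g \<Rightarrow> 'b set \<Rightarrow> 'r) set" where
  "left_ideal B I \<phi> x = {skew_mult B I \<phi> a x | a. a \<in> skew B I \<phi>}"

definition dsum :: "'i set \<Rightarrow> ('i \<Rightarrow> 'm::zero set) \<Rightarrow> ('i \<Rightarrow> 'm) set" where
  "dsum J M = {x. finite {i. x i \<noteq> 0} \<and> (\<forall>i\<in>J. x i \<in> M i) \<and> (\<forall>i. i \<notin> J \<longrightarrow> x i = 0)}"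

definition skew_module_hom :: "'b::{distrib_lattice,order_bot} set \<Rightarrow> ('g::group_add \<Rightarrow> 'b set) \<Rightarrow> ('g \<Rightarrow> 'b \<Rightarrow> 'b)
    \<Rightarrow> ('i \<Rightarrow> ('g \<Rightarrow> 'b set \<Rightarrow> 'r::comm_ring_1)) set \<Rightarrow> ('g \<Rightarrow> 'b set \<Rightarrow> 'r) set
    \<Rightarrow> (('i \<Rightarrow> ('g \<Rightarrow> 'b set \<Rightarrow> 'r)) \<Rightarrow> ('g \<Rightarrow> 'b set \<Rightarrow> 'r)) \<Rightarrow> bool" where
  "skew_module_hom B I \<phi> D N f \<longleftrightarrow> (\<forall>x\<in>D. f x \<in> N) \<and>
     (\<forall>x\<in>D. \<forall>y\<in>D. f (x + y) = f x + f y) \<and>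
     (\<forall>a\<in>skew B I \<phi>. \<forall>x\<in>D. f (\<lambda>i. skew_mult B I \<phi> a (x i)) = skew_mult B I \<phi> a (f x))"

definition join_images :: "('g \<Rightarrow> 'b \<Rightarrow> 'b::{distrib_lattice,order_bot}) \<Rightarrow> ('g \<times> 'b) list \<Rightarrow> 'b" where
  "join_images \<phi> ps = foldr (\<lambda>(g, V) acc. sup (\<phi> g V) acc) ps bot"

end

theory Submission
  imports Defs
begin

text \<open>
  Refine the cover of U into a finite disjoint decomposition U = W_1 + ... + W_n with
  W_j in I_(g_j) and U_j = phi_(g_j^-1)(W_j) in B1; this uses that B1 is an ideal of B2.
  In the skew group ring A the elements s_j = W_j delta_(g_j) and t_j = U_j delta_(g_j^-1)
  satisfy s_j in A (U_j delta_e), (U_j delta_e) t_j in A (U delta_e), and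
  sum_j s_j t_j = U delta_e because 1_U = sum_j 1_(W_j).  Hence x |-> sum_j x_j t_j maps
  the direct sum of the A (U_j delta_e) into A (U delta_e), and it is onto since
  b (U delta_e) = sum_j (b s_j) t_j.  The real work is the associativity of the partial
  skew group ring, which is checked pointwise on the Stone space, where alpha_g acts by
  composition with the partial homeomorphism dual to phi_(g^-1).
\<close>

lemma sum_fun_apply: "(\<Sum>x\<in>A. f x) p = (\<Sum>x\<in>A. f x p)"
  by (induction A rule: infinite_finite_induct) auto

lemma sum_sumset_shift:
  fixes h :: "'g::group_add"
  assumes "finite A" "finite S" "h \<in> A" "\<And>m. - h + m \<notin> S \<Longrightarrow> F m = 0"
  shows "(\<Sum>m\<in>(\<lambda>(a, l). a + l) ` (A \<times> S). F m) = (\<Sum>l\<in>S. F (h + l))"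
proof -
  have "(\<Sum>m\<in>(\<lambda>(a, l). a + l) ` (A \<times> S). F m) = (\<Sum>m\<in>(+) h ` S. F m)"
  proof (rule sum.mono_neutral_right)
    show "finite ((\<lambda>(a, l). a + l) ` (A \<times> S))" using assms(1,2) by simp
    show "(+) h ` S \<subseteq> (\<lambda>(a, l). a + l) ` (A \<times> S)" using assms(3) by auto
    have "- h + m \<notin> S" if "m \<notin> (+) h ` S" for m
      using that image_eqI[of m "(+) h" "- h + m" S] by (auto simp: add.assoc[symmetric])
    then show "\<forall>m\<in>(\<lambda>(a, l). a + l) ` (A \<times> S) - (+) h ` S. F m = 0" using assms(4) by blast
  qed
  also have "\<dots> = (\<Sum>l\<in>S. F (h + l))" by (simp add: sum.reindex)
  finally show ?thesis .
qed

section \<open>Prime filters and locally constant functions\<close>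

lemma prime_filter_subset: "prime_filter B p \<Longrightarrow> a \<in> p \<Longrightarrow> a \<in> B"
  unfolding prime_filter_def by auto

lemma prime_filter_upward: "prime_filter B p \<Longrightarrow> a \<in> p \<Longrightarrow> b \<in> B \<Longrightarrow> a \<le> b \<Longrightarrow> b \<in> p"
  unfolding prime_filter_def by blast

lemma prime_filter_inf: "prime_filter B p \<Longrightarrow> a \<in> p \<Longrightarrow> b \<in> p \<Longrightarrow> inf a b \<in> p"
  unfolding prime_filter_def by blast

lemma prime_filter_bot: "prime_filter B p \<Longrightarrow> bot \<notin> p"
  unfolding prime_filter_def by blast

lemma prime_filter_sup: "prime_filter B p \<Longrightarrow> a \<in> B \<Longrightarrow> b \<in> B \<Longrightarrow> sup a b \<in> p \<Longrightarrow> a \<in> p \<or> b \<in> p"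
  unfolding prime_filter_def by blast

lemma prime_filter_inf_iff:
  "prime_filter B p \<Longrightarrow> a \<in> B \<Longrightarrow> b \<in> B \<Longrightarrow> inf a b \<in> p \<longleftrightarrow> a \<in> p \<and> b \<in> p"
  by (meson inf.cobounded1 inf.cobounded2 prime_filter_inf prime_filter_upward)

lemma ind_inf: "a \<in> B \<Longrightarrow> b \<in> B \<Longrightarrow> ind B a p * ind B b p = ind B (inf a b) p"
  by (auto simp: ind_def prime_filter_inf_iff dest: prime_filter_subset)

lemma ind_bot: "ind B bot = (\<lambda>p. 0)"
  by (auto simp: ind_def prime_filter_bot)

lemma ind_disjoint_sup:
  assumes "gba B" "a \<in> B" "b \<in> B" "inf a b = bot"
  shows "ind B (sup a b) p = ind B a p + ind B b p"
proof -
  have "sup a b \<in> B" using assms unfolding gba_def by blast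
  moreover have "\<not> (a \<in> p \<and> b \<in> p)" if "prime_filter B p"
    using prime_filter_inf[OF that, of a b] prime_filter_bot[OF that] assms(4) by auto
  ultimately show ?thesis using assms(2,3)
    by (auto simp: ind_def dest: prime_filter_sup intro: prime_filter_upward)
qed

lemma sum_delta:
  assumes "(\<lambda>p. \<Sum>j\<in>J. ind B (W j) p)
    = (ind B U :: 'b::{distrib_lattice,order_bot} set \<Rightarrow> 'r::comm_ring_1)"
  shows "(\<Sum>j\<in>J. delta B (W j) g) = (delta B U g :: 'g \<Rightarrow> 'b set \<Rightarrow> 'r)"
proof (intro ext)
  fix k p
  show "(\<Sum>j\<in>J. delta B (W j) g) k p = (delta B U g k p :: 'r)"
    unfolding delta_def sum_fun_apply using fun_cong[OF assms, of p] by simp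
qed

lemma Lc_support:
  assumes "f \<in> Lc B S" "f p \<noteq> 0" shows "prime_filter B p \<and> (\<exists>U\<in>S. U \<in> p)"
proof -
  obtain F c where "F \<subseteq> S" "f = (\<lambda>p. \<Sum>U\<in>F. c U * ind B U p)"
    using assms(1) unfolding Lc_def by blast
  moreover obtain U where "U \<in> F" "c U * ind B U p \<noteq> 0"
    using assms(2) calculation(2) sum.not_neutral_contains_not_neutral by force
  ultimately show ?thesis by (auto simp: ind_def split: if_splits)
qed

lemma Lc_ind: "U \<in> S \<Longrightarrow> ind B U \<in> Lc B S"
  unfolding Lc_def by (rule CollectI, rule exI[of _ "{U}"], rule exI[of _ "\<lambda>_. 1"]) auto

lemma Lc_zero: "(\<lambda>p. 0) \<in> Lc B S"
  unfolding Lc_def by (rule CollectI, rule exI[of _ "{}"]) auto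

lemma Lc_scale: "f \<in> Lc B S \<Longrightarrow> (\<lambda>p. c * f p) \<in> Lc B S"
  unfolding Lc_def
  by (auto simp: sum_distrib_left mult.assoc intro!: exI[of _ "\<lambda>U. c * _ U"])

lemma Lc_add: assumes "f \<in> Lc B S" "g \<in> Lc B S" shows "(\<lambda>p. f p + g p) \<in> Lc B S"
proof -
  obtain F c where F: "finite F" "F \<subseteq> S" "f = (\<lambda>p. \<Sum>U\<in>F. c U * ind B U p)"
    using assms(1) unfolding Lc_def by blast
  obtain F' c' where F': "finite F'" "F' \<subseteq> S" "g = (\<lambda>p. \<Sum>U\<in>F'. c' U * ind B U p)"
    using assms(2) unfolding Lc_def by blast
  define d where "d U = (if U \<in> F then c U else 0) + (if U \<in> F' then c' U else 0)" for U
  have "f p + g p = (\<Sum>U\<in>F \<union> F'. d U * ind B U p)" for p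
  proof -
    have "(\<Sum>U\<in>F \<union> F'. d U * ind B U p) = (\<Sum>U\<in>F \<union> F'. if U \<in> F then c U * ind B U p else 0)
       + (\<Sum>U\<in>F \<union> F'. if U \<in> F' then c' U * ind B U p else 0)"
      unfolding d_def sum.distrib[symmetric] by (intro sum.cong refl) (auto simp: distrib_right)
    also have "\<dots> = f p + g p"
      using F F' by (simp add: sum.inter_restrict[symmetric] Int_absorb1)
    finally show ?thesis by simp
  qed
  then show ?thesis unfolding Lc_def using F F' by blast
qed

lemma Lc_sum: "finite K \<Longrightarrow> (\<And>j. j \<in> K \<Longrightarrow> F j \<in> Lc B S) \<Longrightarrow> (\<lambda>p. \<Sum>j\<in>K. F j p) \<in> Lc B S"
  by (induction K rule: finite_induct) (auto intro: Lc_zero Lc_add)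

lemma Lc_mono: "S \<subseteq> T \<Longrightarrow> Lc B S \<subseteq> Lc B T"
  unfolding Lc_def by blast

lemma Lc_mult:
  fixes f g :: "'b::{distrib_lattice,order_bot} set \<Rightarrow> 'r::comm_ring_1"
  assumes f: "f \<in> Lc B S" and g: "g \<in> Lc B T" and "S \<subseteq> B" "T \<subseteq> B"
  shows "(\<lambda>p. f p * g p) \<in> Lc B {inf a b | a b. a \<in> S \<and> b \<in> T}"
proof -
  obtain F c where F: "finite F" "F \<subseteq> S" "f = (\<lambda>p. \<Sum>U\<in>F. c U * ind B U p)"
    using f unfolding Lc_def by blast
  obtain F' c' where F': "finite F'" "F' \<subseteq> T" "g = (\<lambda>p. \<Sum>V\<in>F'. c' V * ind B V p)"
    using g unfolding Lc_def by blast
  have "ind B U p * ind B V p = (ind B (inf U V) p :: 'r)" if "U \<in> F" "V \<in> F'" for U V p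
    using that F(2) F'(2) assms(3,4) by (blast intro: ind_inf)
  moreover have "f p * g p = (\<Sum>U\<in>F. \<Sum>V\<in>F'. (c U * c' V) * (ind B U p * ind B V p))" for p
    unfolding F(3) F'(3) sum_product by (simp add: ac_simps)
  ultimately have "(\<lambda>p. f p * g p) = (\<lambda>p. \<Sum>U\<in>F. \<Sum>V\<in>F'. (c U * c' V) * ind B (inf U V) p)"
    by (auto intro!: sum.cong)
  also have "\<dots> \<in> Lc B {inf a b | a b. a \<in> S \<and> b \<in> T}"
    using F(1,2) F'(1,2) by (intro Lc_sum Lc_scale Lc_ind) blast+
  finally show ?thesis .
qed

section \<open>Stone duality for a partial action\<close>

locale gba_partial_action =
  fixes B :: "'b::{distrib_lattice,order_bot} set"
    and I :: "'g::group_add \<Rightarrow> 'b set"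
    and \<phi> :: "'g \<Rightarrow> 'b \<Rightarrow> 'b"
  assumes partial_action: "partial_action B I \<phi>"
begin

lemma
  shows gba: "gba B" and gba_ideal_I: "gba_ideal B (I t)"
    and phi_iso: "gba_iso (I (- t)) (I t) (\<phi> t)"
    and ideal_zero: "I 0 = B" and phi_zero: "x \<in> B \<Longrightarrow> \<phi> 0 x = x"
    and phi_image_inter: "\<phi> s ` (I (- s) \<inter> I t) = I s \<inter> I (s + t)"
    and phi_phi: "x \<in> I (- t) \<Longrightarrow> \<phi> t x \<in> I (- s) \<Longrightarrow> \<phi> s (\<phi> t x) = \<phi> (s + t) x"
  using partial_action unfolding partial_action_def by auto

lemma ideal_subset: "x \<in> I t \<Longrightarrow> x \<in> B"
  using gba_ideal_I unfolding gba_ideal_def by blast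

lemma bot_in_ideal: "bot \<in> I t"
  using gba_ideal_I unfolding gba_ideal_def by blast

lemma ideal_inf: "a \<in> I t \<Longrightarrow> b \<in> B \<Longrightarrow> inf a b \<in> I t"
  using gba_ideal_I unfolding gba_ideal_def by blast

lemma ideal_inf': "b \<in> I t \<Longrightarrow> a \<in> B \<Longrightarrow> inf a b \<in> I t"
  using ideal_inf[of b t a] by (simp add: inf_commute)

lemma phi_in_ideal: "x \<in> I (- t) \<Longrightarrow> \<phi> t x \<in> I t"
  using phi_iso unfolding gba_iso_def by (meson bij_betw_apply)

lemma phi_minus_in_ideal: "x \<in> I t \<Longrightarrow> \<phi> (- t) x \<in> I (- t)"
  using phi_in_ideal[of x "- t"] by simp

lemma phi_in_ideal_inter: "x \<in> I (- s) \<Longrightarrow> x \<in> I t \<Longrightarrow> \<phi> s x \<in> I (s + t)"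
  using phi_image_inter[of s t] by blast

lemma phi_inf: "x \<in> I (- t) \<Longrightarrow> y \<in> I (- t) \<Longrightarrow> \<phi> t (inf x y) = inf (\<phi> t x) (\<phi> t y)"
  using phi_iso unfolding gba_iso_def by blast

lemma phi_sup: "x \<in> I (- t) \<Longrightarrow> y \<in> I (- t) \<Longrightarrow> \<phi> t (sup x y) = sup (\<phi> t x) (\<phi> t y)"
  using phi_iso unfolding gba_iso_def by blast

lemma phi_mono: "x \<in> I (- t) \<Longrightarrow> y \<in> I (- t) \<Longrightarrow> x \<le> y \<Longrightarrow> \<phi> t x \<le> \<phi> t y"
  by (metis inf.absorb_iff1 phi_inf)

lemma phi_phi_minus:
  assumes "a \<in> I t" shows "\<phi> t (\<phi> (- t) a) = a"
proof -
  have "\<phi> t (\<phi> (- t) a) = \<phi> (t + - t) a"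
    by (rule phi_phi) (simp_all add: assms phi_minus_in_ideal)
  then show ?thesis by (simp add: phi_zero ideal_subset[OF assms])
qed

lemma phi_minus_phi: "a \<in> I (- t) \<Longrightarrow> \<phi> (- t) (\<phi> t a) = a"
  using phi_phi_minus[of a "- t"] by simp

lemma phi_bot: "\<phi> t bot = bot"
proof -
  have "\<phi> t bot \<le> \<phi> t (\<phi> (- t) bot)"
    by (rule phi_mono) (simp_all add: bot_in_ideal phi_minus_in_ideal)
  then show ?thesis using phi_phi_minus[OF bot_in_ideal] by (simp add: bot_unique)
qed

text \<open>\<open>\<theta> g\<close> is the partial homeomorphism of the Stone space dual to \<open>\<phi> (- g)\<close>;
  it maps \<open>stone_dom g\<close> onto \<open>stone_dom (- g)\<close>.\<close>

abbreviation \<theta> :: "'g \<Rightarrow> 'b set \<Rightarrow> 'b set" where "\<theta> \<equiv> pull B I \<phi>"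

definition stone_dom :: "'g \<Rightarrow> 'b set set" where
  "stone_dom g = {p. prime_filter B p \<and> p \<inter> I g \<noteq> {}}"

lemma mem_theta: "b \<in> \<theta> g p \<longleftrightarrow> b \<in> B \<and> (\<exists>a\<in>p \<inter> I g. \<phi> (- g) a \<le> b)"
  by (simp add: pull_def)

lemma phi_minus_in_theta: "a \<in> p \<Longrightarrow> a \<in> I g \<Longrightarrow> \<phi> (- g) a \<in> \<theta> g p"
  using phi_minus_in_ideal ideal_subset by (auto simp: mem_theta)

lemma mem_theta_iff:
  assumes pf: "prime_filter B p" and V: "V \<in> I (- g)"
  shows "V \<in> \<theta> g p \<longleftrightarrow> \<phi> g V \<in> p"
proof
  assume "V \<in> \<theta> g p"
  then obtain a where a: "a \<in> p" "a \<in> I g" "\<phi> (- g) a \<le> V" by (auto simp: mem_theta)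
  have "\<phi> g (\<phi> (- g) a) \<le> \<phi> g V" by (rule phi_mono[OF phi_minus_in_ideal[OF a(2)] V a(3)])
  then have "a \<le> \<phi> g V" using phi_phi_minus[OF a(2)] by simp
  then show "\<phi> g V \<in> p"
    using prime_filter_upward[OF pf a(1)] ideal_subset[OF phi_in_ideal[OF V]] by blast
next
  assume "\<phi> g V \<in> p"
  then show "V \<in> \<theta> g p"
    using phi_minus_in_theta[OF _ phi_in_ideal[OF V]] phi_minus_phi[OF V] by simp
qed

lemma theta_prime:
  assumes pf: "prime_filter B p" and xy: "x \<in> B" "y \<in> B" "sup x y \<in> \<theta> g p"
  shows "x \<in> \<theta> g p \<or> y \<in> \<theta> g p"
proof -
  obtain a where a: "a \<in> p" "a \<in> I g" "\<phi> (- g) a \<le> sup x y" using xy(3) by (auto simp: mem_theta)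
  define e where "e = \<phi> (- g) a"
  have e: "e \<in> I (- g)" unfolding e_def using phi_minus_in_ideal[OF a(2)] .
  have c: "inf e x \<in> I (- g)" "inf e y \<in> I (- g)" using ideal_inf[OF e] xy by auto
  have "e = sup (inf e x) (inf e y)"
    using a(3) unfolding e_def by (simp add: inf.absorb1 inf_sup_distrib1[symmetric])
  then have "a = sup (\<phi> g (inf e x)) (\<phi> g (inf e y))"
    using phi_phi_minus[OF a(2)] phi_sup[OF c] unfolding e_def by simp
  then have "\<phi> g (inf e x) \<in> p \<or> \<phi> g (inf e y) \<in> p"
    using prime_filter_sup[OF pf] ideal_subset phi_in_ideal c a(1) by metis
  then show ?thesis
    using mem_theta_iff[OF pf c(1)] mem_theta_iff[OF pf c(2)] xy(1,2) e
    by (auto simp: mem_theta intro: le_infI2)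
qed

lemma theta_prime_filter:
  assumes p: "p \<in> stone_dom g"
  shows "prime_filter B (\<theta> g p)"
proof -
  have pf: "prime_filter B p" using p by (simp add: stone_dom_def)
  obtain a where a: "a \<in> p" "a \<in> I g" using p by (auto simp: stone_dom_def)
  have "\<theta> g p \<noteq> {}" using phi_minus_in_theta[OF a] by blast
  moreover have "bot \<notin> \<theta> g p"
  proof
    assume "bot \<in> \<theta> g p"
    then obtain a' where "a' \<in> p" "a' \<in> I g" "\<phi> (- g) a' = bot"
      by (auto simp: mem_theta bot_unique)
    then show False using phi_phi_minus phi_bot prime_filter_bot[OF pf] by metis
  qed
  moreover have "inf x y \<in> \<theta> g p" if xy: "x \<in> \<theta> g p" "y \<in> \<theta> g p" for x y
  proof -
    obtain a1 where h1: "x \<in> B" "a1 \<in> p" "a1 \<in> I g" "\<phi> (- g) a1 \<le> x"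
      using xy(1) by (auto simp: mem_theta)
    obtain a2 where h2: "y \<in> B" "a2 \<in> p" "a2 \<in> I g" "\<phi> (- g) a2 \<le> y"
      using xy(2) by (auto simp: mem_theta)
    have "inf a1 a2 \<in> p \<inter> I g"
      using prime_filter_inf[OF pf h1(2) h2(2)] ideal_inf[OF h1(3) ideal_subset[OF h2(3)]] by blast
    moreover have "\<phi> (- g) (inf a1 a2) = inf (\<phi> (- g) a1) (\<phi> (- g) a2)"
      using phi_inf[of a1 "- g" a2] h1 h2 by simp
    moreover have "inf x y \<in> B" using gba h1(1) h2(1) unfolding gba_def by blast
    ultimately show ?thesis using h1(4) h2(4) unfolding mem_theta
      by (intro conjI bexI[of _ "inf a1 a2"]) (auto intro: le_infI1 le_infI2)
  qed
  moreover have "y \<in> \<theta> g p" if "x \<in> \<theta> g p" "y \<in> B" "x \<le> y" for x y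
    using that unfolding mem_theta by (blast intro: order.trans)
  moreover have "\<theta> g p \<subseteq> B" by (auto simp: mem_theta)
  ultimately show ?thesis using theta_prime[OF pf] unfolding prime_filter_def by blast
qed

lemma theta_stone_dom:
  assumes p: "p \<in> stone_dom g" shows "\<theta> g p \<in> stone_dom (- g)"
proof -
  obtain a where "a \<in> p" "a \<in> I g" using p by (auto simp: stone_dom_def)
  then have "\<phi> (- g) a \<in> \<theta> g p \<inter> I (- g)" using phi_minus_in_theta phi_minus_in_ideal by blast
  then show ?thesis using theta_prime_filter[OF p] by (auto simp: stone_dom_def)
qed

lemma phi_mem_of_theta:
  "prime_filter B p \<Longrightarrow> c \<in> \<theta> g p \<Longrightarrow> c \<in> I (- g) \<Longrightarrow> c \<in> I h \<Longrightarrow> \<phi> g c \<in> p \<inter> I (g + h)"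
  using mem_theta_iff phi_in_ideal_inter by blast

lemma theta_theta_subset:
  assumes p: "p \<in> stone_dom g"
  shows "\<theta> h (\<theta> g p) \<subseteq> \<theta> (g + h) p"
proof
  fix b assume "b \<in> \<theta> h (\<theta> g p)"
  then obtain c where c: "b \<in> B" "c \<in> \<theta> g p" "c \<in> I h" "\<phi> (- h) c \<le> b" by (auto simp: mem_theta)
  obtain a where a: "a \<in> p" "a \<in> I g" using p by (auto simp: stone_dom_def)
  let ?c = "inf c (\<phi> (- g) a)"
  have e: "\<phi> (- g) a \<in> I (- g)" using phi_minus_in_ideal[OF a(2)] .
  have c': "?c \<in> \<theta> g p" "?c \<in> I h" "?c \<in> I (- g)"
    using prime_filter_inf[OF theta_prime_filter[OF p] c(2) phi_minus_in_theta[OF a]]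
      ideal_inf[OF c(3) ideal_subset[OF e]] ideal_inf'[OF e ideal_subset[OF c(3)]] by auto
  have d: "\<phi> g ?c \<in> p \<inter> I (g + h)"
    using phi_mem_of_theta[OF _ c'(1,3,2)] p by (simp add: stone_dom_def)
  have "\<phi> (- (g + h)) (\<phi> g ?c) = \<phi> (- (g + h) + g) ?c"
    using phi_phi[OF c'(3)] d by simp
  also have "- (g + h) + g = - h" by (simp add: minus_add add.assoc)
  finally have "\<phi> (- (g + h)) (\<phi> g ?c) \<le> \<phi> (- h) c"
    using phi_mono[of ?c "- h" c] c'(2) c(3) by simp
  then show "b \<in> \<theta> (g + h) p" using c(1,4) d by (auto simp: mem_theta intro: order.trans)
qed

lemma theta_subset_theta_theta:
  assumes p: "p \<in> stone_dom g"
  shows "\<theta> (g + h) p \<subseteq> \<theta> h (\<theta> g p)"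
proof
  fix b assume "b \<in> \<theta> (g + h) p"
  then obtain d where d: "b \<in> B" "d \<in> p" "d \<in> I (g + h)" "\<phi> (- (g + h)) d \<le> b"
    by (auto simp: mem_theta)
  obtain a where a: "a \<in> p" "a \<in> I g" using p by (auto simp: stone_dom_def)
  let ?d = "inf d a"
  have d': "?d \<in> p" "?d \<in> I (g + h)" "?d \<in> I g"
    using prime_filter_inf[OF _ d(2) a(1)] p ideal_inf[OF d(3) ideal_subset[OF a(2)]]
      ideal_inf'[OF a(2) ideal_subset[OF d(3)]] by (auto simp: stone_dom_def)
  have cI: "\<phi> (- g) ?d \<in> I h"
    using phi_in_ideal_inter[of ?d "- g" "g + h"] d' by (simp add: add.assoc[symmetric])
  have "\<phi> (- h) (\<phi> (- g) ?d) = \<phi> (- h + - g) ?d"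
    using phi_phi[of ?d "- g" "- h"] d' cI by simp
  also have "- h + - g = - (g + h)" by (simp add: minus_add)
  finally have "\<phi> (- h) (\<phi> (- g) ?d) \<le> \<phi> (- (g + h)) d"
    using phi_mono[of ?d "- (g + h)" d] d'(2) d(3) by simp
  then show "b \<in> \<theta> h (\<theta> g p)"
    unfolding mem_theta[of b h]
    using d(1,4) cI phi_minus_in_theta[OF d'(1,3)] by (blast intro: order.trans)
qed

lemma theta_theta:
  assumes p: "p \<in> stone_dom g" and q: "\<theta> g p \<in> stone_dom h"
  shows "p \<in> stone_dom (g + h)" "\<theta> h (\<theta> g p) = \<theta> (g + h) p"
proof -
  obtain c where "c \<in> \<theta> g p" "c \<in> I h" using q by (auto simp: stone_dom_def)
  then have "\<phi> (- h) c \<in> \<theta> (g + h) p" using theta_theta_subset[OF p] phi_minus_in_theta by blast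
  then show "p \<in> stone_dom (g + h)" using p by (auto simp: stone_dom_def mem_theta)
  show "\<theta> h (\<theta> g p) = \<theta> (g + h) p"
    using theta_theta_subset[OF p] theta_subset_theta_theta[OF p] by blast
qed

lemma theta_zero:
  assumes pf: "prime_filter B p" shows "\<theta> 0 p = p"
proof (intro set_eqI)
  fix b
  have "b \<in> \<theta> 0 p \<longleftrightarrow> b \<in> B \<and> (\<exists>a\<in>p. a \<le> b)"
    using prime_filter_subset[OF pf] by (auto simp: mem_theta ideal_zero phi_zero)
  then show "b \<in> \<theta> 0 p \<longleftrightarrow> b \<in> p"
    using prime_filter_subset[OF pf] prime_filter_upward[OF pf] by blast
qed

lemma theta_theta_minus: "p \<in> stone_dom g \<Longrightarrow> \<theta> (- g) (\<theta> g p) = p"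
  using theta_theta(2)[OF _ theta_stone_dom] theta_zero by (simp add: stone_dom_def)

abbreviation \<alpha> :: "'g \<Rightarrow> ('b set \<Rightarrow> 'r::comm_ring_1) \<Rightarrow> 'b set \<Rightarrow> 'r" where
  "\<alpha> \<equiv> alpha B I \<phi>"

lemma alpha_in: "p \<in> stone_dom g \<Longrightarrow> \<alpha> g F p = F (\<theta> g p)"
  by (simp add: alpha_def stone_dom_def)

lemma alpha_out: "p \<notin> stone_dom g \<Longrightarrow> \<alpha> g F p = 0"
  by (auto simp: alpha_def stone_dom_def)

lemma alpha_scale: "\<alpha> g (\<lambda>q. c * F q) p = c * \<alpha> g F p"
  by (simp add: alpha_def)

lemma alpha_sum: "\<alpha> g (\<lambda>q. \<Sum>j\<in>J. F j q) p = (\<Sum>j\<in>J. \<alpha> g (F j) p)"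
  by (cases "p \<in> stone_dom g") (simp_all add: alpha_in alpha_out)

lemma alpha_zero: "\<alpha> g (\<lambda>q. 0) = (\<lambda>q. 0)"
  by (simp add: alpha_def fun_eq_iff)

lemma alpha_alpha:
  "p \<in> stone_dom g \<Longrightarrow> \<theta> g p \<in> stone_dom h \<Longrightarrow> \<alpha> h F (\<theta> g p) = \<alpha> (g + h) F p"
  using theta_theta by (simp add: alpha_in)

lemma alpha_minus_theta: "p \<in> stone_dom g \<Longrightarrow> \<alpha> (- g) F (\<theta> g p) = F p"
  using theta_stone_dom theta_theta_minus by (simp add: alpha_in)

lemma alpha_ind: "V \<in> I (- g) \<Longrightarrow> \<alpha> g (ind B V) = ind B (\<phi> g V)"
proof (intro ext)
  fix p assume V: "V \<in> I (- g)"
  show "\<alpha> g (ind B V) p = ind B (\<phi> g V) p"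
  proof (cases "p \<in> stone_dom g")
    case True
    then show ?thesis
      using theta_prime_filter mem_theta_iff[OF _ V] by (simp add: alpha_in ind_def stone_dom_def)
  next
    case False
    then have "\<phi> g V \<notin> p \<or> \<not> prime_filter B p"
      using phi_in_ideal[OF V] by (auto simp: stone_dom_def)
    then show ?thesis using False by (auto simp: alpha_out ind_def)
  qed
qed

lemma Lc_support_stone_dom: "f \<in> Lc B (I g) \<Longrightarrow> f p \<noteq> 0 \<Longrightarrow> p \<in> stone_dom g"
  using Lc_support by (fastforce simp: stone_dom_def)

lemma Lc_alpha:
  assumes S: "S \<subseteq> I (- g)" and f: "f \<in> Lc B S"
  shows "\<alpha> g f \<in> Lc B (\<phi> g ` S)"
proof -
  obtain F c where F: "finite F" "F \<subseteq> S" "f = (\<lambda>p. \<Sum>U\<in>F. c U * ind B U p)"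
    using f unfolding Lc_def by blast
  have "\<alpha> g f p = (\<Sum>U\<in>F. c U * ind B (\<phi> g U) p)" for p
    using F(2) S by (auto simp: F(3) alpha_sum alpha_scale alpha_ind intro!: sum.cong)
  then have "\<alpha> g f = (\<lambda>p. \<Sum>U\<in>F. c U * ind B (\<phi> g U) p)" by blast
  also have "\<dots> \<in> Lc B (\<phi> g ` S)"
    using F(1,2) by (intro Lc_sum Lc_scale Lc_ind) blast+
  finally show ?thesis .
qed

section \<open>The partial skew group ring\<close>

abbreviation skew_times (infixl "\<star>" 70) where
  "a \<star> b \<equiv> skew_mult B I \<phi> a b"

lemma skew_finite_support: "a \<in> skew B I \<phi> \<Longrightarrow> finite {g. a g \<noteq> 0}"
  by (simp add: skew_def)

lemma skew_Lc: "a \<in> skew B I \<phi> \<Longrightarrow> a g \<in> Lc B (I g)"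
  by (simp add: skew_def)

lemma skew_zero: "0 \<in> skew B I \<phi>"
  by (simp add: skew_def zero_fun_def Lc_zero)

lemma skew_add: assumes "a \<in> skew B I \<phi>" "b \<in> skew B I \<phi>" shows "a + b \<in> skew B I \<phi>"
proof -
  have "{g. (a + b) g \<noteq> 0} \<subseteq> {g. a g \<noteq> 0} \<union> {g. b g \<noteq> 0}" by auto
  then show ?thesis
    using assms finite_subset by (fastforce simp: skew_def plus_fun_def intro: Lc_add)
qed

lemma skew_sum: "finite J \<Longrightarrow> (\<And>j. j \<in> J \<Longrightarrow> a j \<in> skew B I \<phi>) \<Longrightarrow> (\<Sum>j\<in>J. a j) \<in> skew B I \<phi>"
  by (induction J rule: finite_induct) (auto intro: skew_zero skew_add)

lemma skew_mult_eq_sum: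
  assumes "finite S" "{g. a g \<noteq> 0} \<subseteq> S"
  shows "(a \<star> b) k = (\<Sum>g\<in>S. \<alpha> g (\<lambda>p. \<alpha> (- g) (a g) p * b (- g + k) p))"
  unfolding skew_mult_def
  using assms by (intro sum.mono_neutral_left) (auto simp: zero_fun_def alpha_zero)

lemma skew_mult_support:
  "{k. (a \<star> b) k \<noteq> 0} \<subseteq> (\<lambda>(g, m). g + m) ` ({g. a g \<noteq> 0} \<times> {m. b m \<noteq> 0})"
proof
  fix k assume "k \<in> {k. (a \<star> b) k \<noteq> 0}"
  then obtain g where g: "a g \<noteq> 0" "\<alpha> g (\<lambda>p. \<alpha> (- g) (a g) p * b (- g + k) p) \<noteq> 0"
    unfolding skew_mult_def using sum.not_neutral_contains_not_neutral by force
  then have "b (- g + k) \<noteq> 0" by (auto simp: zero_fun_def alpha_zero)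
  moreover have "k = g + (- g + k)" by (simp add: add.assoc[symmetric])
  ultimately show "k \<in> (\<lambda>(g, m). g + m) ` ({g. a g \<noteq> 0} \<times> {m. b m \<noteq> 0})"
    using g(1) by (intro image_eqI[where x="(g, - g + k)"]) auto
qed

lemma Lc_skew_term:
  assumes f: "f \<in> Lc B (I g)" and c: "c \<in> Lc B (I m)"
  shows "\<alpha> g (\<lambda>p. \<alpha> (- g) f p * c p) \<in> Lc B (I (g + m))"
proof -
  have "\<alpha> (- g) f \<in> Lc B (\<phi> (- g) ` I g)" by (rule Lc_alpha) (simp_all add: f)
  also have "\<dots> \<subseteq> Lc B (I (- g))" by (intro Lc_mono) (auto intro: phi_minus_in_ideal)
  finally have "(\<lambda>p. \<alpha> (- g) f p * c p) \<in> Lc B {inf x y | x y. x \<in> I (- g) \<and> y \<in> I m}"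
    using c ideal_subset by (intro Lc_mult) auto
  also have "\<dots> \<subseteq> Lc B (I (- g) \<inter> I m)"
    by (intro Lc_mono) (auto intro: ideal_inf ideal_inf' ideal_subset)
  finally have "\<alpha> g (\<lambda>p. \<alpha> (- g) f p * c p) \<in> Lc B (\<phi> g ` (I (- g) \<inter> I m))"
    by (intro Lc_alpha) auto
  also have "\<dots> \<subseteq> Lc B (I (g + m))"
    by (intro Lc_mono) (auto simp: phi_image_inter)
  finally show ?thesis .
qed

lemma skew_mult_closed:
  assumes a: "a \<in> skew B I \<phi>" and b: "b \<in> skew B I \<phi>"
  shows "a \<star> b \<in> skew B I \<phi>"
proof -
  have "finite {k. (a \<star> b) k \<noteq> 0}"
    using skew_mult_support a b finite_subset by (fastforce simp: skew_def)
  moreover have "(a \<star> b) k \<in> Lc B (I k)" for k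
  proof -
    have "\<alpha> g (\<lambda>p. \<alpha> (- g) (a g) p * b (- g + k) p) \<in> Lc B (I k)" for g
      using Lc_skew_term[OF skew_Lc[OF a, of g] skew_Lc[OF b, of "- g + k"]]
      by (simp add: add.assoc[symmetric])
    then have "(\<lambda>p. \<Sum>g\<in>{g. a g \<noteq> 0}. \<alpha> g (\<lambda>p. \<alpha> (- g) (a g) p * b (- g + k) p) p) \<in> Lc B (I k)"
      using skew_finite_support[OF a] by (intro Lc_sum)
    then show ?thesis unfolding skew_mult_def sum_fun_apply[abs_def] .
  qed
  ultimately show ?thesis by (simp add: skew_def)
qed

lemma alpha_alpha_minus_mult:
  assumes "f \<in> Lc B (I h)"
  shows "\<alpha> h (\<lambda>q. \<alpha> (- h) f q * G q) p = f p * \<alpha> h G p"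
proof (cases "p \<in> stone_dom h")
  case True
  then show ?thesis by (simp add: alpha_in alpha_minus_theta)
next
  case False
  then show ?thesis using Lc_support_stone_dom[OF assms] by (auto simp: alpha_out)
qed

lemma skew_mult_apply:
  assumes "a \<in> skew B I \<phi>" "finite S" "{g. a g \<noteq> 0} \<subseteq> S"
  shows "(a \<star> b) k p = (\<Sum>h\<in>S. a h p * \<alpha> h (b (- h + k)) p)"
  using assms skew_Lc[OF assms(1)]
  by (simp add: skew_mult_eq_sum sum_fun_apply alpha_alpha_minus_mult)

lemma skew_mult_zero_left: "0 \<star> b = 0"
  by (simp add: skew_mult_def fun_eq_iff)

lemma skew_mult_add_left:
  assumes a: "a \<in> skew B I \<phi>" and a': "a' \<in> skew B I \<phi>"
  shows "(a + a') \<star> b = a \<star> b + a' \<star> b"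
proof (intro ext)
  fix k p
  let ?S = "{g. a g \<noteq> 0} \<union> {g. a' g \<noteq> 0}"
  have S: "finite ?S" using a a' by (simp add: skew_finite_support)
  have "((a + a') \<star> b) k p = (\<Sum>h\<in>?S. (a h p + a' h p) * \<alpha> h (b (- h + k)) p)"
    using skew_mult_apply[OF skew_add[OF a a'] S] by (force simp: plus_fun_def)
  also have "\<dots> = (a \<star> b) k p + (a' \<star> b) k p"
    using skew_mult_apply[OF a S] skew_mult_apply[OF a' S]
    by (simp add: distrib_right sum.distrib)
  finally show "((a + a') \<star> b) k p = (a \<star> b + a' \<star> b) k p" by simp
qed

lemma skew_mult_sum_left:
  "finite J \<Longrightarrow> (\<And>j. j \<in> J \<Longrightarrow> a j \<in> skew B I \<phi>) \<Longrightarrow> (\<Sum>j\<in>J. a j) \<star> b = (\<Sum>j\<in>J. a j \<star> b)"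
  by (induction J rule: finite_induct)
    (simp_all add: skew_mult_zero_left skew_mult_add_left skew_sum)

lemma skew_mult_sum_right:
  assumes a: "a \<in> skew B I \<phi>"
  shows "a \<star> (\<Sum>j\<in>J. b j) = (\<Sum>j\<in>J. a \<star> b j)"
proof (intro ext)
  fix k p
  let ?S = "{g. a g \<noteq> 0}"
  have "(a \<star> (\<Sum>j\<in>J. b j)) k p = (\<Sum>h\<in>?S. \<Sum>j\<in>J. a h p * \<alpha> h (b j (- h + k)) p)"
    using skew_mult_apply[OF a skew_finite_support[OF a]]
    by (simp add: sum_fun_apply[abs_def] alpha_sum sum_distrib_left)
  also have "\<dots> = (\<Sum>j\<in>J. a \<star> b j) k p"
    using skew_mult_apply[OF a skew_finite_support[OF a]]
    by (simp add: sum_fun_apply sum.swap[of _ ?S])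
  finally show "(a \<star> (\<Sum>j\<in>J. b j)) k p = (\<Sum>j\<in>J. a \<star> b j) k p" .
qed

lemma alpha_skew_mult:
  assumes b: "b \<in> skew B I \<phi>" and p: "p \<in> stone_dom h"
  shows "\<alpha> h ((b \<star> c) m) p = (\<Sum>l\<in>{l. b l \<noteq> 0}. \<alpha> h (b l) p * \<alpha> (h + l) (c (- l + m)) p)"
proof -
  let ?q = "\<theta> h p"
  have "\<alpha> h ((b \<star> c) m) p = (\<Sum>l\<in>{l. b l \<noteq> 0}. b l ?q * \<alpha> l (c (- l + m)) ?q)"
    using skew_mult_apply[OF b skew_finite_support[OF b]] p by (simp add: alpha_in)
  also have "\<dots> = (\<Sum>l\<in>{l. b l \<noteq> 0}. \<alpha> h (b l) p * \<alpha> (h + l) (c (- l + m)) p)"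
  proof (intro sum.cong refl)
    fix l
    show "b l ?q * \<alpha> l (c (- l + m)) ?q = \<alpha> h (b l) p * \<alpha> (h + l) (c (- l + m)) p"
    proof (cases "b l ?q = 0")
      case True
      then show ?thesis by (simp add: alpha_in[OF p])
    next
      case False
      then have "?q \<in> stone_dom l" by (rule Lc_support_stone_dom[OF skew_Lc[OF b]])
      then show ?thesis by (simp add: alpha_alpha[OF p] alpha_in[OF p])
    qed
  qed
  finally show ?thesis .
qed

lemma skew_mult_assoc:
  assumes a: "a \<in> skew B I \<phi>" and b: "b \<in> skew B I \<phi>"
  shows "(a \<star> b) \<star> c = a \<star> (b \<star> c)"
proof (intro ext)
  fix k p
  let ?Sa = "{h. a h \<noteq> 0}" and ?Sb = "{l. b l \<noteq> 0}"
  let ?M = "(\<lambda>(h, l). h + l) ` (?Sa \<times> ?Sb)"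
  let ?term = "\<lambda>h l. a h p * \<alpha> h (b l) p * \<alpha> (h + l) (c (- (h + l) + k)) p"
  have Sa: "finite ?Sa" and Sb: "finite ?Sb" using a b by (simp_all add: skew_finite_support)
  have inner: "(\<Sum>m\<in>?M. a h p * \<alpha> h (b (- h + m)) p * \<alpha> m (c (- m + k)) p) = (\<Sum>l\<in>?Sb. ?term h l)"
    if "h \<in> ?Sa" for h
    by (rule trans[OF sum_sumset_shift[OF Sa Sb that]])
      (simp_all add: zero_fun_def alpha_zero add.assoc[symmetric])
  have "((a \<star> b) \<star> c) k p = (\<Sum>m\<in>?M. \<Sum>h\<in>?Sa. a h p * \<alpha> h (b (- h + m)) p * \<alpha> m (c (- m + k)) p)"
    using skew_mult_apply[OF skew_mult_closed[OF a b] _ skew_mult_support] Sa Sb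
    by (simp add: skew_mult_apply[OF a Sa] sum_distrib_right)
  also have "\<dots> = (\<Sum>h\<in>?Sa. \<Sum>l\<in>?Sb. ?term h l)"
    using inner by (subst sum.swap) simp
  also have "\<dots> = (\<Sum>h\<in>?Sa. a h p * \<alpha> h ((b \<star> c) (- h + k)) p)"
  proof (intro sum.cong refl)
    fix h
    have "- (h + l) + k = - l + (- h + k)" for l by (metis add.assoc minus_add)
    then show "(\<Sum>l\<in>?Sb. ?term h l) = a h p * \<alpha> h ((b \<star> c) (- h + k)) p"
      using Lc_support_stone_dom[OF skew_Lc[OF a]] alpha_skew_mult[OF b]
      by (cases "a h p = 0") (simp_all add: sum_distrib_left mult.assoc)
  qed
  also have "\<dots> = (a \<star> (b \<star> c)) k p" by (simp add: skew_mult_apply[OF a Sa])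
  finally show "((a \<star> b) \<star> c) k p = (a \<star> (b \<star> c)) k p" .
qed

lemma delta_in_skew:
  assumes "U \<in> I g" shows "(delta B U g :: 'g \<Rightarrow> 'b set \<Rightarrow> 'r::comm_ring_1) \<in> skew B I \<phi>"
proof -
  have "finite {h. (delta B U g h :: 'b set \<Rightarrow> 'r) \<noteq> 0}"
    by (rule finite_subset[of _ "{g}"]) (auto simp: delta_def)
  moreover have "(delta B U g h :: 'b set \<Rightarrow> 'r) \<in> Lc B (I h)" for h
    using assms by (simp add: delta_def zero_fun_def Lc_zero Lc_ind)
  ultimately show ?thesis by (simp add: skew_def)
qed

lemma delta_mult_delta:
  assumes U: "U \<in> I g" and V: "V \<in> B"
  shows "delta B U g \<star> delta B V h
    = (delta B (\<phi> g (inf (\<phi> (- g) U) V)) (g + h) :: 'g \<Rightarrow> 'b set \<Rightarrow> 'r::comm_ring_1)"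
    (is "?L = ?R")
proof (rule ext)
  fix k
  have U': "\<phi> (- g) U \<in> I (- g)" using phi_minus_in_ideal[OF U] .
  have "?L k = \<alpha> g (\<lambda>p. \<alpha> (- g) (ind B U) p * delta B V h (- g + k) p)"
    by (subst skew_mult_eq_sum[of "{g}"]) (auto simp: delta_def)
  also have "\<dots> = \<alpha> g (\<lambda>p. ind B (\<phi> (- g) U) p * delta B V h (- g + k) p)"
    by (simp add: alpha_ind U)
  also have "\<dots> = delta B (\<phi> g (inf (\<phi> (- g) U) V)) (g + h) k"
  proof (cases "k = g + h")
    case True
    have "\<alpha> g (\<lambda>p. ind B (\<phi> (- g) U) p * ind B V p) = (\<alpha> g (ind B (inf (\<phi> (- g) U) V)) :: _ \<Rightarrow> 'r)"
      by (simp add: ind_inf[OF ideal_subset[OF U'] V])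
    then show ?thesis
      using True by (simp add: delta_def add.assoc[symmetric] alpha_ind[OF ideal_inf[OF U' V]])
  next
    case False
    then have "- g + k \<noteq> h" by auto
    then show ?thesis using False by (simp add: delta_def alpha_zero zero_fun_def)
  qed
  finally show "?L k = ?R k" .
qed

lemma left_ideal_subset_skew: "e \<in> skew B I \<phi> \<Longrightarrow> left_ideal B I \<phi> e \<subseteq> skew B I \<phi>"
  unfolding left_ideal_def using skew_mult_closed by blast

lemma left_ideal_mult:
  assumes a: "a \<in> skew B I \<phi>" and y: "y \<in> left_ideal B I \<phi> e"
  shows "a \<star> y \<in> left_ideal B I \<phi> e"
proof -
  obtain b where b: "b \<in> skew B I \<phi>" "y = b \<star> e" using y unfolding left_ideal_def by blast
  then have "a \<star> y = (a \<star> b) \<star> e" using skew_mult_assoc[OF a b(1)] by simp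
  then show ?thesis using skew_mult_closed[OF a b(1)] unfolding left_ideal_def by blast
qed

lemma left_ideal_sum:
  assumes "finite J" "\<And>j. j \<in> J \<Longrightarrow> y j \<in> left_ideal B I \<phi> e"
  shows "(\<Sum>j\<in>J. y j) \<in> left_ideal B I \<phi> e"
proof -
  have ex: "\<forall>j\<in>J. \<exists>b. b \<in> skew B I \<phi> \<and> y j = b \<star> e"
    using assms(2) unfolding left_ideal_def by blast
  obtain b where b: "\<forall>j\<in>J. b j \<in> skew B I \<phi> \<and> y j = b j \<star> e"
    using bchoice[OF ex] by blast
  then have "(\<Sum>j\<in>J. y j) = (\<Sum>j\<in>J. b j) \<star> e"
    by (simp add: skew_mult_sum_left[OF assms(1)])
  then show ?thesis using skew_sum[OF assms(1)] b unfolding left_ideal_def by blast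
qed

lemma left_ideal_right_mult:
  assumes y: "y \<in> left_ideal B I \<phi> e'" and e': "e' \<in> skew B I \<phi>"
    and t: "e' \<star> t \<in> left_ideal B I \<phi> e"
  shows "y \<star> t \<in> left_ideal B I \<phi> e"
proof -
  obtain c where c: "c \<in> skew B I \<phi>" "y = c \<star> e'" using y unfolding left_ideal_def by blast
  then have "y \<star> t = c \<star> (e' \<star> t)" using skew_mult_assoc[OF c(1) e'] by simp
  then show ?thesis using left_ideal_mult[OF c(1) t] by simp
qed

lemma right_mult_onto_left_ideal:
  fixes n :: nat
  assumes es: "\<And>j. j < n \<Longrightarrow> es j \<in> skew B I \<phi>"
    and s: "\<And>j. j < n \<Longrightarrow> s j \<in> left_ideal B I \<phi> (es j)"
    and es_t: "\<And>j. j < n \<Longrightarrow> es j \<star> t j \<in> left_ideal B I \<phi> e"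
    and st: "(\<Sum>j<n. s j \<star> t j) = e"
  defines "D \<equiv> dsum {..<n} (\<lambda>j. left_ideal B I \<phi> (es j))" and "f \<equiv> \<lambda>x. \<Sum>j<n. x j \<star> t j"
  shows "skew_module_hom B I \<phi> D (left_ideal B I \<phi> e) f \<and> f ` D = left_ideal B I \<phi> e"
proof -
  have x_ideal: "x j \<in> left_ideal B I \<phi> (es j)" if "x \<in> D" "j < n" for x j
    using that unfolding D_def dsum_def by blast
  have x_skew: "x j \<in> skew B I \<phi>" if "x \<in> D" "j < n" for x j
    using left_ideal_subset_skew[OF es] x_ideal that by blast
  have into: "f x \<in> left_ideal B I \<phi> e" if "x \<in> D" for x
    unfolding f_def using that
    by (intro left_ideal_sum left_ideal_right_mult[OF x_ideal es es_t]) auto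
  have add: "f (x + y) = f x + f y" if "x \<in> D" "y \<in> D" for x y
    unfolding f_def using that
    by (simp add: skew_mult_add_left[OF x_skew x_skew] sum.distrib)
  have linear: "f (\<lambda>j. a \<star> x j) = a \<star> f x" if "a \<in> skew B I \<phi>" "x \<in> D" for a x
    unfolding f_def using that
    by (simp add: skew_mult_assoc[OF _ x_skew] skew_mult_sum_right)
  have onto: "y \<in> f ` D" if y: "y \<in> left_ideal B I \<phi> e" for y
  proof -
    obtain b where b: "b \<in> skew B I \<phi>" "y = b \<star> e" using y unfolding left_ideal_def by blast
    define x where "x j = (if j < n then b \<star> s j else 0)" for j
    have "x \<in> D"
      unfolding D_def dsum_def x_def using left_ideal_mult[OF b(1) s]
      by (auto intro: finite_subset[of _ "{..<n}"])
    moreover have "f x = y"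
    proof -
      have "f x = (\<Sum>j<n. b \<star> (s j \<star> t j))"
        unfolding f_def x_def
        using skew_mult_assoc[OF b(1) subsetD[OF left_ideal_subset_skew[OF es] s]] by simp
      also have "\<dots> = y" by (simp add: b(2) st skew_mult_sum_right[OF b(1), symmetric])
      finally show ?thesis .
    qed
    ultimately show ?thesis by blast
  qed
  show ?thesis unfolding skew_module_hom_def using into add linear onto by blast
qed

section \<open>Decomposing an element along the cover\<close>

text \<open>W delta_g and phi_(g^-1)(W) delta_(g^-1) are mutually inverse partial isometries between
  the idempotents phi_(g^-1)(W) delta_e and W delta_e.\<close>

lemma delta_transfer:
  assumes W: "W \<in> I g" and WU: "W \<le> U" and U: "U \<in> B"
  defines "W' \<equiv> \<phi> (- g) W"
  shows "(delta B W g :: 'g \<Rightarrow> 'b set \<Rightarrow> 'r::comm_ring_1) \<in> left_ideal B I \<phi> (delta B W' 0)"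
      (is ?s)
    and "delta B W' 0 \<star> (delta B W' (- g) :: 'g \<Rightarrow> 'b set \<Rightarrow> 'r) \<in> left_ideal B I \<phi> (delta B U 0)"
      (is ?t)
    and "delta B W g \<star> delta B W' (- g) = (delta B W 0 :: 'g \<Rightarrow> 'b set \<Rightarrow> 'r)"
      (is ?st)
proof -
  have W': "W' \<in> I (- g)" unfolding W'_def using phi_minus_in_ideal[OF W] .
  have W'B: "W' \<in> B" using ideal_subset[OF W'] .
  have W'_inv: "\<phi> (- g) W = W'" "\<phi> g W' = W" unfolding W'_def using phi_phi_minus[OF W] by simp_all
  have "delta B W g = delta B W g \<star> (delta B W' 0 :: 'g \<Rightarrow> 'b set \<Rightarrow> 'r)"
    by (simp add: delta_mult_delta[OF W W'B] W'_inv)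
  then show ?s using delta_in_skew[OF W] unfolding left_ideal_def by blast
  have "delta B W' 0 \<star> (delta B W' (- g) :: 'g \<Rightarrow> 'b set \<Rightarrow> 'r) = delta B W' (- g)"
    using W'B by (simp add: delta_mult_delta ideal_zero phi_zero)
  also have "\<dots> = delta B W' (- g) \<star> delta B U 0"
    using WU by (simp add: delta_mult_delta[OF W' U] W'_inv inf.absorb1)
  finally show ?t using delta_in_skew[OF W'] unfolding left_ideal_def by blast
  show ?st by (simp add: delta_mult_delta[OF W W'B] W'_inv)
qed

lemma split_off_image:
  assumes B1: "gba_ideal B B1" and U: "U \<in> B" and V: "V \<in> I (- g)" "V \<in> B1"
    and cover: "U \<le> sup (\<phi> g V) J"
  obtains T c where "T \<in> I g" "T \<le> U" "\<phi> (- g) T \<in> B1"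
    "c \<in> B" "c \<le> J" "inf T c = bot" "sup T c = U"
proof -
  define T where "T = inf U (\<phi> g V)"
  have T: "T \<in> I g" "T \<le> U" "T \<le> \<phi> g V"
    unfolding T_def using ideal_inf'[OF phi_in_ideal[OF V(1)] U] by auto
  obtain c where c: "c \<in> B" "inf T c = bot" "sup T c = U"
    using gba ideal_subset[OF T(1)] T(2) U unfolding gba_def by blast
  have cU: "c \<le> U" using c(3) by auto
  then have "inf c (\<phi> g V) = inf c T"
    unfolding T_def by (simp add: inf.absorb1 inf.assoc[symmetric])
  then have disj: "inf c (\<phi> g V) = bot" using c(2) by (simp add: inf_commute)
  have "c \<le> inf c (sup (\<phi> g V) J)" using cU cover by simp
  also have "\<dots> = inf c J" by (simp add: inf_sup_distrib1 disj sup.absorb2)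
  finally have "c \<le> J" by simp
  moreover have "\<phi> (- g) T \<in> B1"
  proof -
    have "\<phi> (- g) T \<le> V"
      using phi_mono[of T "- g" "\<phi> g V"] T phi_in_ideal[OF V(1)] phi_minus_phi[OF V(1)] by simp
    moreover have "inf V (\<phi> (- g) T) \<in> B1"
      using B1 V(2) ideal_subset[OF phi_minus_in_ideal[OF T(1)]] unfolding gba_ideal_def by blast
    ultimately show ?thesis by (simp add: inf.absorb2)
  qed
  ultimately show ?thesis using that T c by blast
qed

lemma disjoint_refinement:
  assumes B1: "gba_ideal B B1"
  shows "U \<in> B \<Longrightarrow> \<forall>(g, V)\<in>set ps. V \<in> I (- g) \<inter> B1 \<Longrightarrow> U \<le> join_images \<phi> ps \<Longrightarrow>
    \<exists>(n :: nat) gs Ws. (\<forall>j<n. Ws j \<in> I (gs j) \<and> Ws j \<le> U \<and> \<phi> (- gs j) (Ws j) \<in> B1) \<and>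
      (\<lambda>p. \<Sum>j<n. ind B (Ws j) p) = (ind B U :: 'b set \<Rightarrow> 'r::comm_ring_1)"
proof (induction ps arbitrary: U)
  case Nil
  then have "U = bot" by (simp add: join_images_def bot_unique)
  then show ?case by (intro exI[of _ 0]) (simp add: ind_bot)
next
  case (Cons gV ps)
  obtain g V where gV: "gV = (g, V)" by (cases gV)
  have V: "V \<in> I (- g)" "V \<in> B1" using Cons.prems(2) gV by auto
  have "U \<le> sup (\<phi> g V) (join_images \<phi> ps)" using Cons.prems(3) gV by (simp add: join_images_def)
  then obtain T c where T: "T \<in> I g" "T \<le> U" "\<phi> (- g) T \<in> B1"
    and c: "c \<in> B" "c \<le> join_images \<phi> ps" "inf T c = bot" "sup T c = U"
    using split_off_image[OF B1 Cons.prems(1) V] by blast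
  obtain n :: nat and gs Ws where Ws: "\<forall>j<n. Ws j \<in> I (gs j) \<and> Ws j \<le> c \<and> \<phi> (- gs j) (Ws j) \<in> B1"
    and ind_c: "(\<lambda>p. \<Sum>j<n. ind B (Ws j) p) = (ind B c :: 'b set \<Rightarrow> 'r)"
    using Cons.IH[OF c(1) _ c(2)] Cons.prems(2) by auto
  have "(\<lambda>p. \<Sum>j<Suc n. ind B ((Ws(n := T)) j) p) = (ind B U :: 'b set \<Rightarrow> 'r)"
    using ind_c
    by (simp add: fun_eq_iff add.commute c(4)[symmetric]
        ind_disjoint_sup[OF gba ideal_subset[OF T(1)] c(1,3)])
  moreover have "c \<le> U" using c(4) by auto
  ultimately show ?case
    using Ws T by (intro exI[of _ "Suc n"] exI[of _ "gs(n := g)"] exI[of _ "Ws(n := T)"])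
      (auto simp: less_Suc_eq intro: order.trans)
qed

lemma onto_left_ideal_of_cover:
  assumes B1: "gba_ideal B B1" and U: "U \<in> B"
    and ps: "\<forall>(g, V)\<in>set ps. V \<in> I (- g) \<inter> B1" and cover: "U \<le> join_images \<phi> ps"
  shows "\<exists>(J :: nat set) (Us :: nat \<Rightarrow> 'b) (f :: (nat \<Rightarrow> ('g \<Rightarrow> 'b set \<Rightarrow> 'r::comm_ring_1)) \<Rightarrow> _).
    (\<forall>i\<in>J. Us i \<in> B1) \<and>
    skew_module_hom B I \<phi> (dsum J (\<lambda>i. left_ideal B I \<phi> (delta B (Us i) 0)))
      (left_ideal B I \<phi> (delta B U 0)) f \<and>
    f ` dsum J (\<lambda>i. left_ideal B I \<phi> (delta B (Us i) 0)) = left_ideal B I \<phi> (delta B U 0)"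
proof -
  obtain n :: nat and gs Ws where Ws: "\<forall>j<n. Ws j \<in> I (gs j) \<and> Ws j \<le> U \<and> \<phi> (- gs j) (Ws j) \<in> B1"
    and ind_U: "(\<lambda>p. \<Sum>j<n. ind B (Ws j) p) = (ind B U :: 'b set \<Rightarrow> 'r)"
    using disjoint_refinement[OF B1 U ps cover] by blast
  define Us where "Us j = \<phi> (- gs j) (Ws j)" for j
  define t :: "nat \<Rightarrow> 'g \<Rightarrow> 'b set \<Rightarrow> 'r" where "t j = delta B (Us j) (- gs j)" for j
  have "(\<Sum>j<n. delta B (Ws j) (gs j) \<star> t j) = (\<Sum>j<n. delta B (Ws j) 0)"
    using Ws U unfolding t_def Us_def by (intro sum.cong refl delta_transfer(3)) auto
  also have "\<dots> = delta B U 0" by (rule sum_delta[OF ind_U])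
  finally have st: "(\<Sum>j<n. delta B (Ws j) (gs j) \<star> t j) = delta B U 0" .
  have es: "delta B (Us j) 0 \<in> skew B I \<phi>" if "j < n" for j
  proof (rule delta_in_skew)
    show "Us j \<in> I 0"
      using ideal_subset[OF phi_minus_in_ideal] Ws that unfolding Us_def ideal_zero by blast
  qed
  have s: "delta B (Ws j) (gs j) \<in> left_ideal B I \<phi> (delta B (Us j) 0)" if "j < n" for j
    unfolding Us_def by (rule delta_transfer(1)) (use Ws that U in auto)
  have es_t: "delta B (Us j) 0 \<star> t j \<in> left_ideal B I \<phi> (delta B U 0)" if "j < n" for j
    unfolding t_def Us_def by (rule delta_transfer(2)) (use Ws that U in auto)
  show ?thesis
    using right_mult_onto_left_ideal[OF es s es_t st] Ws
    by (intro exI[of _ "{..<n}"] exI[of _ Us]) (auto simp: Us_def)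
qed

end

theorem lemma4p9:
  fixes B1 B2 :: "'b::{distrib_lattice,order_bot} set"
    and I1 I2 :: "'g::group_add \<Rightarrow> 'b set"
    and \<phi>1 \<phi>2 :: "'g \<Rightarrow> 'b \<Rightarrow> 'b"
  assumes sub: "partial_subaction B1 I1 \<phi>1 B2 I2 \<phi>2"
    and ideal: "gba_ideal B2 B1"
    and cover: "\<forall>U\<in>B2. \<exists>ps. (\<forall>(g, V)\<in>set ps. V \<in> I2 (- g) \<inter> B1) \<and> U \<le> join_images \<phi>2 ps"
  shows "\<forall>U\<in>B2. \<exists>(J :: nat set) (Us :: nat \<Rightarrow> 'b)
           (f :: (nat \<Rightarrow> ('g \<Rightarrow> 'b set \<Rightarrow> 'r::comm_ring_1)) \<Rightarrow> ('g \<Rightarrow> 'b set \<Rightarrow> 'r)).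
           (\<forall>i\<in>J. Us i \<in> B1) \<and>
           skew_module_hom B2 I2 \<phi>2
             (dsum J (\<lambda>i. left_ideal B2 I2 \<phi>2 (delta B2 (Us i) 0)))
             (left_ideal B2 I2 \<phi>2 (delta B2 U 0)) f \<and>
           f ` dsum J (\<lambda>i. left_ideal B2 I2 \<phi>2 (delta B2 (Us i) 0))
             = left_ideal B2 I2 \<phi>2 (delta B2 U 0)"
proof -
  interpret gba_partial_action B2 I2 \<phi>2
    using sub by (simp add: gba_partial_action_def partial_subaction_def)
  show ?thesis using cover onto_left_ideal_of_cover[OF ideal] by blast
qed

end
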